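(* There exists an absolute constant $C>0$ such that the following holds. Let $p\geq2$, let $\ell\geq1$ be an integer and let $\theta\in(0,1)$. Let $f:G\to\mathbb{C}$, $L\geq1$, and let $S,T$ be nonempty subsets of $G=\mathbb{Z}/N\mathbb{Z}$ with $|S+T|\leq L|S|$. Then there exists a set $X\subset T$ with $|X|\geq(2L)^{-Cp\ell^2/\theta^2}|T|$ such that $$\|f*\mu_S-f*\mu_S*\lambda_X^{(\ell)}\|_{L^p}\leq\theta\|f\|_{L^p},$$ where $\lambda_X=\mu_X*\mu_{-X}$ and $\lambda_X^{(\ell)}$ denotes the $\ell$-fold convolution $\lambda_X*\dots*\lambda_X$.
   Context: $\|f\|_{L^p}=(\frac1N\sum_{x\in G}|f(x)|^p)^{1/p}$. $\mu_X=(|X|/N)^{-1}1_X$. Convolution: $f*g(x)=\frac1N\sum_yf(y)g(x-y)$. *)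

theory Defs
  imports "HOL-Analysis.Analysis"
begin

text \<open>The group G = Z/NZ is represented by the residues {0..<N} (as integers), with
  addition modulo N. Functions on G are functions int => complex of which only the
  values on {0..<N} are used.\<close>

definition ZN :: "nat \<Rightarrow> int set" where
  "ZN N = {0..<int N}"

definition Lp_norm :: "nat \<Rightarrow> real \<Rightarrow> (int \<Rightarrow> complex) \<Rightarrow> real" where
  "Lp_norm N p f = ((1 / real N) * (\<Sum>x\<in>ZN N. cmod (f x) powr p)) powr (1 / p)"

definition conv :: "nat \<Rightarrow> (int \<Rightarrow> complex) \<Rightarrow> (int \<Rightarrow> complex) \<Rightarrow> int \<Rightarrow> complex" where
  "conv N f g x = (1 / of_nat N) * (\<Sum>y\<in>ZN N. f y * g ((x - y) mod int N))"

definition mu :: "nat \<Rightarrow> int set \<Rightarrow> int \<Rightarrow> complex" where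
  "mu N X x = (if x \<in> X then of_real (real N / real (card X)) else 0)"

definition sumset :: "nat \<Rightarrow> int set \<Rightarrow> int set \<Rightarrow> int set" where
  "sumset N S T = {(s + t) mod int N | s t. s \<in> S \<and> t \<in> T}"

definition negset :: "nat \<Rightarrow> int set \<Rightarrow> int set" where
  "negset N X = {(- x) mod int N | x. x \<in> X}"

definition lam :: "nat \<Rightarrow> int set \<Rightarrow> int \<Rightarrow> complex" where
  "lam N X = conv N (mu N X) (mu N (negset N X))"

text \<open>l-fold convolution power; the 0-th power is the convolution identity N*1_{0}.\<close>
fun conv_pow :: "nat \<Rightarrow> (int \<Rightarrow> complex) \<Rightarrow> nat \<Rightarrow> int \<Rightarrow> complex" where
  "conv_pow N h 0 = (\<lambda>x. if x = 0 then of_nat N else 0)"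
| "conv_pow N h (Suc n) = conv N (conv_pow N h n) h"

end

theory Submission
  imports Defs "HOL-Probability.Hoeffding"
begin

text \<open>
  Sample a \<open>k\<close>-tuple of elements of \<open>S\<close>
  uniformly at random. By symmetrisation and Khintchine's inequality the average of the
  corresponding translates of \<open>f\<close> is within \<open>\<epsilon>\<close> of \<open>f * \<mu>\<^sub>S\<close> in \<open>L\<^sup>p\<close> for at least half of all
  tuples, provided \<open>k \<ge> 64 p / \<epsilon>\<^sup>2\<close>. Translating the good tuples by the elements of \<open>T\<close> lands in
  \<open>(S + T)\<^sup>k\<close>, a set of at most \<open>(L |S|)\<^sup>k\<close> tuples, so by pigeonhole at least \<open>|T| / (2 L\<^sup>k)\<close> elements
  \<open>t \<in> T\<close> translate some good tuple to one and the same tuple. These \<open>t\<close> form the set \<open>X\<close>: for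
  \<open>t, t' \<in> X\<close> the shift by \<open>t' - t\<close> is a \<open>2\<epsilon>\<close>-almost period of \<open>f * \<mu>\<^sub>S\<close>, so averaging over \<open>X - X\<close> changes
  \<open>f * \<mu>\<^sub>S\<close> by at most \<open>2\<epsilon>\<close>, and telescoping costs a factor \<open>l\<close> for the \<open>l\<close>-fold power of \<open>\<lambda>\<^sub>X\<close>.
\<close>

section \<open>Power means\<close>

lemma convex_on_powr:
  assumes p: "p \<ge> 1"
  shows "convex_on {0..} (\<lambda>x::real. x powr p)"
proof (rule convex_onI)
  fix t x y :: real
  assume t: "0 < t" "t < 1" and x: "x \<in> {0..}" and y: "y \<in> {0..}"
  have shrink: "(s * z) powr p \<le> s * z powr p" if "0 \<le> s" "s \<le> 1" "0 \<le> z" for s z :: real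
  proof -
    have "s powr p \<le> s"
      using that p powr_le_one_le[of s p] by (cases "s = 0") auto
    then show ?thesis
      using that by (simp add: powr_mult mult_right_mono)
  qed
  show "((1 - t) *\<^sub>R x + t *\<^sub>R y) powr p \<le> (1 - t) * x powr p + t * y powr p"
  proof (cases "x = 0 \<or> y = 0")
    case True
    then show ?thesis
      using shrink[of t y] shrink[of "1 - t" x] t x y by auto
  next
    case False
    then show ?thesis
      using convex_onD[OF powr_convex[OF p], of t x y] t x y by simp
  qed
qed (rule convex_real_interval)

lemma cmod_convex_comb_powr_le:
  fixes w :: "'i \<Rightarrow> real" and z :: "'i \<Rightarrow> complex"
  assumes p: "p \<ge> 1" and fin: "finite I"
    and w: "\<And>i. i \<in> I \<Longrightarrow> w i \<ge> 0" and ws: "(\<Sum>i\<in>I. w i) = 1"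
  shows "cmod (\<Sum>i\<in>I. of_real (w i) * z i) powr p \<le> (\<Sum>i\<in>I. w i * cmod (z i) powr p)"
proof -
  have ne: "I \<noteq> {}" using ws by auto
  have "cmod (\<Sum>i\<in>I. of_real (w i) * z i) \<le> (\<Sum>i\<in>I. w i * cmod (z i))"
    by (rule order_trans[OF norm_sum]) (simp add: norm_mult w)
  then have "cmod (\<Sum>i\<in>I. of_real (w i) * z i) powr p \<le> (\<Sum>i\<in>I. w i * cmod (z i)) powr p"
    using p by (intro powr_mono2) auto
  also have "\<dots> \<le> (\<Sum>i\<in>I. w i * cmod (z i) powr p)"
    using convex_on_sum[OF fin ne convex_on_powr[OF p], of w "\<lambda>i. cmod (z i)"] w ws by simp
  finally show ?thesis .
qed

lemma cmod_sum_powr_le: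
  fixes z :: "'i \<Rightarrow> complex"
  assumes p: "p \<ge> 1" and fin: "finite I"
  shows "cmod (\<Sum>i\<in>I. z i) powr p \<le> real (card I) powr (p - 1) * (\<Sum>i\<in>I. cmod (z i) powr p)"
proof (cases "I = {}")
  case False
  define n where "n = real (card I)"
  have n: "n > 0" using False fin by (simp add: n_def card_gt_0_iff)
  have "cmod (\<Sum>i\<in>I. z i) powr p = cmod (\<Sum>i\<in>I. of_real (1 / n) * (of_real n * z i)) powr p"
    using n by simp
  also have "\<dots> \<le> (\<Sum>i\<in>I. 1 / n * cmod (of_real n * z i) powr p)"
    by (rule cmod_convex_comb_powr_le[OF p fin]) (use n in \<open>auto simp: n_def\<close>)
  also have "\<dots> = n powr p / n * (\<Sum>i\<in>I. cmod (z i) powr p)"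
    using n by (simp add: norm_mult powr_mult sum_distrib_left)
  also have "n powr p / n = n powr (p - 1)"
    using n by (simp add: powr_diff)
  finally show ?thesis by (simp add: n_def)
qed (use p in simp)

lemma cmod_add_powr_le:
  assumes "p \<ge> 1"
  shows "cmod (a + b) powr p \<le> 2 powr (p - 1) * (cmod a powr p + cmod b powr p)"
  using cmod_sum_powr_le[OF assms, of "{0::nat, 1}" "\<lambda>i. if i = 0 then a else b"] by simp

lemma add_powr_le:
  fixes a b :: real
  assumes "p \<ge> 1" "a \<ge> 0" "b \<ge> 0"
  shows "(a + b) powr p \<le> 2 powr (p - 1) * (a powr p + b powr p)"
proof -
  have "cmod (of_real a + of_real b) = a + b"
    using assms by (simp flip: of_real_add)
  then show ?thesis
    using cmod_add_powr_le[OF assms(1), of "of_real a" "of_real b"] assms by simp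
qed

lemma power2_powr: "(a::real) \<ge> 0 \<Longrightarrow> (a\<^sup>2) powr q = a powr (2 * q)"
proof (cases "a = 0")
  case False
  assume "a \<ge> 0"
  then have "a\<^sup>2 = a powr 2"
    using False powr_realpow[of a 2] by simp
  then show ?thesis
    by (simp add: powr_powr)
qed simp

lemma sum_power2_powr_le:
  fixes c :: "'i \<Rightarrow> complex"
  assumes p: "p \<ge> 2" and fin: "finite I"
  shows "(\<Sum>i\<in>I. (cmod (c i))\<^sup>2) powr (p / 2) \<le> real (card I) powr (p / 2 - 1) * (\<Sum>i\<in>I. cmod (c i) powr p)"
proof -
  have "cmod (\<Sum>i\<in>I. of_real ((cmod (c i))\<^sup>2)) = (\<Sum>i\<in>I. (cmod (c i))\<^sup>2)"
    by (simp only: of_real_sum[symmetric] norm_of_real) (simp add: sum_nonneg)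
  then show ?thesis
    using cmod_sum_powr_le[of "p / 2" I "\<lambda>i. of_real ((cmod (c i))\<^sup>2)"] p fin
    by (simp add: power2_powr norm_power)
qed

section \<open>Khintchine's inequality\<close>

definition signs :: "nat \<Rightarrow> (nat \<Rightarrow> real) set" where
  "signs k = PiE {..<k} (\<lambda>_. {-1, 1})"

lemma card_signs: "card (signs k) = 2 ^ k"
  by (simp add: signs_def card_PiE numeral_2_eq_2)

lemma exp_plus_exp_minus_le: "exp y + exp (- y) \<le> 2 * exp (y\<^sup>2 / 2)" for y :: real
proof -
  define h where "h = 2 * \<bar>y\<bar>"
  have "- h * (1 / 2) + ln (1 + (1 / 2) * (exp h - 1)) \<le> h\<^sup>2 / 8"
    using Hoeffdings_lemma_aux[of h "1 / 2"] by (simp add: h_def)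
  then have "ln ((1 + exp h) / 2) \<le> y\<^sup>2 / 2 + \<bar>y\<bar>"
    by (simp add: h_def power2_eq_square algebra_simps add_divide_distrib)
  then have "(1 + exp h) / 2 \<le> exp (y\<^sup>2 / 2 + \<bar>y\<bar>)"
    by (metis exp_le_cancel_iff exp_ln add_pos_pos exp_gt_zero zero_less_one half_gt_zero)
  then have "(1 + exp h) / 2 * exp (- \<bar>y\<bar>) \<le> exp (y\<^sup>2 / 2 + \<bar>y\<bar>) * exp (- \<bar>y\<bar>)"
    by (intro mult_right_mono) auto
  then have "(exp (- \<bar>y\<bar>) + exp \<bar>y\<bar>) / 2 \<le> exp (y\<^sup>2 / 2)"
    by (simp add: h_def algebra_simps flip: exp_add)
  then show ?thesis
    by (cases "y \<ge> 0") auto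
qed

lemma sum_signs_exp_le:
  "(\<Sum>e\<in>signs k. exp (l * (\<Sum>i<k. e i * x i))) \<le> 2 ^ k * exp (l\<^sup>2 * (\<Sum>i<k. (x i)\<^sup>2) / 2)"
proof -
  have "(\<Sum>e\<in>signs k. exp (l * (\<Sum>i<k. e i * x i))) = (\<Sum>e\<in>signs k. \<Prod>i<k. exp (l * e i * x i))"
    by (simp add: sum_distrib_left exp_sum mult.assoc)
  also have "\<dots> = (\<Prod>i<k. \<Sum>ei\<in>{-1::real, 1}. exp (l * ei * x i))"
    unfolding signs_def by (subst prod_sum_PiE) auto
  also have "\<dots> = (\<Prod>i<k. exp (l * x i) + exp (- (l * x i)))"
    by (simp add: add.commute)
  also have "\<dots> \<le> (\<Prod>i<k. 2 * exp ((l * x i)\<^sup>2 / 2))"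
    by (intro prod_mono) (auto simp: exp_plus_exp_minus_le add_nonneg_nonneg)
  also have "\<dots> = 2 ^ k * exp (l\<^sup>2 * (\<Sum>i<k. (x i)\<^sup>2) / 2)"
    by (simp add: prod.distrib exp_sum[symmetric] sum_divide_distrib sum_distrib_left power_mult_distrib)
  finally show ?thesis .
qed

lemma abs_powr_le_exp_plus_exp_minus:
  fixes t :: real
  assumes p: "p > 0" and l: "l > 0"
  shows "\<bar>t\<bar> powr p \<le> (p / l) powr p * exp (- p) * (exp (l * t) + exp (- (l * t)))"
proof (cases "t = 0")
  case False
  then have t: "\<bar>t\<bar> > 0" by simp
  \<comment> \<open>\<open>ln u \<le> u - 1\<close> at \<open>u = l \<bar>t\<bar> / p\<close>\<close>
  have "p * (ln \<bar>t\<bar> - ln (p / l)) \<le> l * \<bar>t\<bar> - p"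
    using ln_le_minus_one[of "l * \<bar>t\<bar> / p"] t p l by (simp add: ln_div ln_mult field_simps)
  then have "exp (p * ln \<bar>t\<bar>) \<le> exp (p * ln (p / l) + l * \<bar>t\<bar> - p)"
    by (simp add: algebra_simps)
  also have "\<dots> = (p / l) powr p * exp (- p) * exp (l * \<bar>t\<bar>)"
    using p l by (simp add: powr_def exp_add exp_diff exp_minus field_simps)
  also have "\<dots> \<le> (p / l) powr p * exp (- p) * (exp (l * t) + exp (- (l * t)))"
    by (intro mult_left_mono) (auto simp: abs_if)
  finally show ?thesis
    using t by (simp add: powr_def)
qed (use p in \<open>simp add: add_pos_pos\<close>)

lemma khintchine_real:
  assumes p: "p > 0"
  shows "(\<Sum>e\<in>signs k. \<bar>\<Sum>i<k. e i * x i\<bar> powr p) \<le> 2 * 2 ^ k * (p * (\<Sum>i<k. (x i)\<^sup>2)) powr (p / 2)"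
proof (cases "(\<Sum>i<k. (x i)\<^sup>2) = 0")
  case True
  then have "\<forall>i<k. x i = 0" by (simp add: sum_nonneg_eq_0_iff)
  then show ?thesis by simp
next
  case False
  define s2 where "s2 = (\<Sum>i<k. (x i)\<^sup>2)"
  have s2: "s2 > 0" using False by (simp add: s2_def sum_nonneg order_le_neq_trans)
  \<comment> \<open>the exponential moment is taken at the optimal scale \<open>l\<close>, where \<open>l\<^sup>2 s2 = p\<close>\<close>
  define l where "l = sqrt (p / s2)"
  have l: "l > 0" and l2: "l\<^sup>2 * s2 = p"
    using p s2 by (auto simp: l_def)
  define K where "K = (p / l) powr p * exp (- p)"
  have "(\<Sum>e\<in>signs k. \<bar>\<Sum>i<k. e i * x i\<bar> powr p)
      \<le> (\<Sum>e\<in>signs k. K * (exp (l * (\<Sum>i<k. e i * x i)) + exp ((- l) * (\<Sum>i<k. e i * x i))))"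
    unfolding K_def using abs_powr_le_exp_plus_exp_minus[OF p l] by (intro sum_mono) simp
  also have "\<dots> = K * ((\<Sum>e\<in>signs k. exp (l * (\<Sum>i<k. e i * x i)))
      + (\<Sum>e\<in>signs k. exp ((- l) * (\<Sum>i<k. e i * x i))))"
    by (simp only: sum_distrib_left sum.distrib distrib_left)
  also have "\<dots> \<le> K * (2 ^ k * exp (l\<^sup>2 * s2 / 2) + 2 ^ k * exp ((- l)\<^sup>2 * s2 / 2))"
    unfolding s2_def K_def by (intro mult_left_mono add_mono sum_signs_exp_le) auto
  also have "\<dots> = 2 * 2 ^ k * ((p / l) powr p * exp (- p / 2))"
    using l2 by (simp add: K_def field_simps flip: exp_add)
  also have "(p / l) powr p = (p * s2) powr (p / 2)"
  proof -
    have "p / l = (p * s2) powr (1 / 2)"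
      using p s2 by (simp add: l_def powr_half_sqrt real_sqrt_divide real_sqrt_mult field_simps)
    then show ?thesis
      by (simp add: powr_powr)
  qed
  also have "2 * 2 ^ k * ((p * s2) powr (p / 2) * exp (- p / 2)) \<le> 2 * 2 ^ k * (p * s2) powr (p / 2)"
    using p by (intro mult_left_mono mult_right_le_one_le) auto
  finally show ?thesis
    by (simp add: s2_def)
qed

lemma cmod_powr_le_Re_Im:
  assumes p: "p \<ge> 1"
  shows "cmod z powr p \<le> 2 powr (p - 1) * (\<bar>Re z\<bar> powr p + \<bar>Im z\<bar> powr p)"
proof -
  have "cmod z powr p \<le> (\<bar>Re z\<bar> + \<bar>Im z\<bar>) powr p"
    using p by (intro powr_mono2 cmod_le) auto
  also have "\<dots> \<le> 2 powr (p - 1) * (\<bar>Re z\<bar> powr p + \<bar>Im z\<bar> powr p)"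
    using p by (intro add_powr_le) auto
  finally show ?thesis .
qed

lemma khintchine_complex:
  assumes p: "p \<ge> 2"
  shows "(\<Sum>e\<in>signs k. cmod (\<Sum>i<k. of_real (e i) * c i) powr p)
    \<le> 2 ^ k * (2 powr (p + 1) * p powr (p / 2) * real k powr (p / 2 - 1)) * (\<Sum>i<k. cmod (c i) powr p)"
proof -
  define Q where "Q = (\<Sum>i<k. (cmod (c i))\<^sup>2)"
  have part: "(\<Sum>e\<in>signs k. \<bar>\<Sum>i<k. e i * r i\<bar> powr p) \<le> 2 * 2 ^ k * (p * Q) powr (p / 2)"
    if r: "\<And>i. \<bar>r i\<bar> \<le> cmod (c i)" for r
  proof -
    have "(\<Sum>i<k. (r i)\<^sup>2) \<le> Q"
      unfolding Q_def by (intro sum_mono) (metis r abs_ge_zero power2_abs power_mono)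
    then have "(p * (\<Sum>i<k. (r i)\<^sup>2)) powr (p / 2) \<le> (p * Q) powr (p / 2)"
      using p by (intro powr_mono2 mult_left_mono) (auto simp: sum_nonneg)
    moreover have "(\<Sum>e\<in>signs k. \<bar>\<Sum>i<k. e i * r i\<bar> powr p) \<le> 2 * 2 ^ k * (p * (\<Sum>i<k. (r i)\<^sup>2)) powr (p / 2)"
      using p by (intro khintchine_real) auto
    ultimately show ?thesis
      by (smt (verit) mult_left_mono zero_le_power)
  qed
  have split: "cmod (\<Sum>i<k. of_real (e i) * c i) powr p \<le>
      2 powr (p - 1) * (\<bar>\<Sum>i<k. e i * Re (c i)\<bar> powr p + \<bar>\<Sum>i<k. e i * Im (c i)\<bar> powr p)" for e
    using cmod_powr_le_Re_Im[of p "\<Sum>i<k. of_real (e i) * c i"] p by (simp add: Re_sum Im_sum)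
  have "(\<Sum>e\<in>signs k. cmod (\<Sum>i<k. of_real (e i) * c i) powr p)
      \<le> (\<Sum>e\<in>signs k. 2 powr (p - 1) *
           (\<bar>\<Sum>i<k. e i * Re (c i)\<bar> powr p + \<bar>\<Sum>i<k. e i * Im (c i)\<bar> powr p))"
    by (intro sum_mono split)
  also have "\<dots> = 2 powr (p - 1) * ((\<Sum>e\<in>signs k. \<bar>\<Sum>i<k. e i * Re (c i)\<bar> powr p)
         + (\<Sum>e\<in>signs k. \<bar>\<Sum>i<k. e i * Im (c i)\<bar> powr p))"
    by (simp only: sum.distrib distrib_left sum_distrib_left)
  also have "\<dots> \<le> 2 powr (p - 1) * (2 * 2 ^ k * (p * Q) powr (p / 2) + 2 * 2 ^ k * (p * Q) powr (p / 2))"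
    using part[of "\<lambda>i. Re (c i)"] part[of "\<lambda>i. Im (c i)"]
    by (intro mult_left_mono add_mono) (auto simp: abs_Re_le_cmod abs_Im_le_cmod)
  also have "\<dots> = 2 ^ k * 2 powr (p + 1) * p powr (p / 2) * Q powr (p / 2)"
    using p powr_add[of 2 "p - 1" 2] by (simp add: Q_def powr_mult sum_nonneg add.commute)
  also have "\<dots> \<le> 2 ^ k * 2 powr (p + 1) * p powr (p / 2) * (real k powr (p / 2 - 1) * (\<Sum>i<k. cmod (c i) powr p))"
    unfolding Q_def using sum_power2_powr_le[OF p, of "{..<k}" c] by (intro mult_left_mono) auto
  finally show ?thesis
    by (simp only: mult_ac)
qed

section \<open>Averages over random tuples\<close>

definition tuples :: "nat \<Rightarrow> 'a set \<Rightarrow> (nat \<Rightarrow> 'a) set" where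
  "tuples k S = PiE {..<k} (\<lambda>_. S)"

lemma finite_tuples [simp]: "finite S \<Longrightarrow> finite (tuples k S)"
  by (simp add: tuples_def finite_PiE)

lemma card_tuples: "finite S \<Longrightarrow> card (tuples k S) = card S ^ k"
  by (simp add: tuples_def card_PiE)

lemma sum_tuples_coordinate:
  fixes G :: "'a \<Rightarrow> 'b::comm_ring_1"
  assumes S: "finite S" and i: "i < k"
  shows "(\<Sum>a\<in>tuples k S. G (a i)) = of_nat (card S) ^ (k - 1) * (\<Sum>s\<in>S. G s)"
proof -
  let ?H = "\<lambda>j s. if j = i then G s else 1"
  have "(\<Sum>a\<in>tuples k S. G (a i)) = (\<Sum>a\<in>tuples k S. \<Prod>j<k. ?H j (a j))"
    using i by (intro sum.cong refl) (simp add: prod.delta)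
  also have "\<dots> = (\<Prod>j<k. \<Sum>s\<in>S. ?H j s)"
    unfolding tuples_def by (subst prod_sum_PiE) (use S in auto)
  also have "\<dots> = (\<Sum>s\<in>S. G s) * (\<Prod>j\<in>{..<k} - {i}. \<Sum>s\<in>S. ?H j s)"
    using i by (subst prod.remove[of _ i]) auto
  also have "(\<Prod>j\<in>{..<k} - {i}. \<Sum>s\<in>S. ?H j s) = of_nat (card S) ^ (k - 1)"
    using i by (subst prod.cong[OF refl, of _ _ "\<lambda>_. of_nat (card S)"]) auto
  finally show ?thesis
    by (simp add: mult.commute)
qed

lemma sum_pairs_fst:
  fixes h :: "'a \<Rightarrow> real"
  shows "(\<Sum>z\<in>A \<times> B. h (fst z)) = real (card B) * (\<Sum>a\<in>A. h a)"
proof -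
  have "(\<Sum>z\<in>A \<times> B. h (fst z)) = (\<Sum>a\<in>A. \<Sum>b\<in>B. h a)"
    by (subst sum.cartesian_product) (simp add: case_prod_beta)
  then show ?thesis
    by (simp add: sum_distrib_left)
qed

lemma sum_pairs_snd:
  fixes h :: "'a \<Rightarrow> real"
  shows "(\<Sum>z\<in>A \<times> B. h (snd z)) = real (card A) * (\<Sum>b\<in>B. h b)"
proof -
  have "(\<Sum>z\<in>A \<times> B. h (snd z)) = (\<Sum>a\<in>A. \<Sum>b\<in>B. h b)"
    by (subst sum.cartesian_product) (simp add: case_prod_beta)
  then show ?thesis
    by simp
qed

lemma sum_tuple_pairs_sign_flip:
  fixes F :: "'a \<Rightarrow> complex" and \<Phi> :: "complex \<Rightarrow> 'b::comm_monoid_add"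
  assumes e: "e \<in> signs k"
  shows "(\<Sum>z\<in>tuples k S \<times> tuples k S. \<Phi> (\<Sum>i<k. F (fst z i) - F (snd z i)))
       = (\<Sum>z\<in>tuples k S \<times> tuples k S. \<Phi> (\<Sum>i<k. of_real (e i) * (F (fst z i) - F (snd z i))))"
proof -
  define \<sigma> where "\<sigma> z = ((\<lambda>i. if e i = -1 then snd z i else fst z i),
                        (\<lambda>i. if e i = -1 then fst z i else snd z i))"
    for z :: "(nat \<Rightarrow> 'a) \<times> (nat \<Rightarrow> 'a)"
  have inv: "\<sigma> (\<sigma> z) = z" for z
    by (cases z) (auto simp: \<sigma>_def)
  have mem: "\<sigma> z \<in> tuples k S \<times> tuples k S" if "z \<in> tuples k S \<times> tuples k S" for z
    using that by (cases z) (auto simp: \<sigma>_def tuples_def PiE_def Pi_def extensional_def)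
  have flip: "(\<Sum>i<k. F (fst (\<sigma> z) i) - F (snd (\<sigma> z) i)) = (\<Sum>i<k. of_real (e i) * (F (fst z i) - F (snd z i)))"
    for z
  proof (intro sum.cong refl)
    fix i assume "i \<in> {..<k}"
    then have "e i = -1 \<or> e i = 1"
      using e by (auto simp: signs_def PiE_def Pi_def)
    then show "F (fst (\<sigma> z) i) - F (snd (\<sigma> z) i) = of_real (e i) * (F (fst z i) - F (snd z i))"
      by (auto simp: \<sigma>_def)
  qed
  have "(\<Sum>z\<in>tuples k S \<times> tuples k S. \<Phi> (\<Sum>i<k. F (fst z i) - F (snd z i)))
      = (\<Sum>z\<in>tuples k S \<times> tuples k S. \<Phi> (\<Sum>i<k. F (fst (\<sigma> z) i) - F (snd (\<sigma> z) i)))"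
    by (rule sum.reindex_bij_witness[where i=\<sigma> and j=\<sigma>]) (auto simp: inv mem)
  then show ?thesis
    by (simp only: flip)
qed

lemma sum_tuple_pairs_moment_le:
  fixes F :: "'a \<Rightarrow> complex"
  assumes p: "p \<ge> 2"
  shows "(\<Sum>z\<in>tuples k S \<times> tuples k S. cmod (\<Sum>i<k. F (fst z i) - F (snd z i)) powr p)
    \<le> 2 powr (p + 1) * p powr (p / 2) * real k powr (p / 2 - 1) *
       (\<Sum>z\<in>tuples k S \<times> tuples k S. \<Sum>i<k. cmod (F (fst z i) - F (snd z i)) powr p)"
    (is "?W \<le> ?K * ?D")
proof -
  have "2 ^ k * ?W = (\<Sum>e\<in>signs k. ?W)"
    by (simp add: card_signs)
  also have "\<dots> = (\<Sum>e\<in>signs k. \<Sum>z\<in>tuples k S \<times> tuples k S.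
           cmod (\<Sum>i<k. of_real (e i) * (F (fst z i) - F (snd z i))) powr p)"
    by (rule sum.cong[OF refl]) (rule sum_tuple_pairs_sign_flip[where \<Phi>="\<lambda>x. cmod x powr p"])
  also have "\<dots> = (\<Sum>z\<in>tuples k S \<times> tuples k S. \<Sum>e\<in>signs k.
           cmod (\<Sum>i<k. of_real (e i) * (F (fst z i) - F (snd z i))) powr p)"
    by (rule sum.swap)
  also have "\<dots> \<le> (\<Sum>z\<in>tuples k S \<times> tuples k S. 2 ^ k * ?K * (\<Sum>i<k. cmod (F (fst z i) - F (snd z i)) powr p))"
    by (intro sum_mono khintchine_complex p)
  also have "\<dots> = 2 ^ k * (?K * ?D)"
    by (simp add: sum_distrib_left mult.assoc)
  finally show ?thesis
    by simp
qed

lemma sum_tuple_pairs_coordinate_le: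
  fixes F :: "'a \<Rightarrow> complex"
  assumes S: "finite S" and p: "p \<ge> 1"
  shows "(\<Sum>z\<in>tuples k S \<times> tuples k S. \<Sum>i<k. cmod (F (fst z i) - F (snd z i)) powr p)
    \<le> 2 powr p * real k * real (card S) ^ k * real (card S) ^ (k - 1) * (\<Sum>s\<in>S. cmod (F s) powr p)"
proof -
  define T where "T = tuples k S"
  define M where "M = real k * real (card S) ^ k * real (card S) ^ (k - 1) * (\<Sum>s\<in>S. cmod (F s) powr p)"
  have coordinates: "(\<Sum>a\<in>T. \<Sum>i<k. cmod (F (a i)) powr p) * real (card T) = M"
  proof -
    have "(\<Sum>a\<in>T. \<Sum>i<k. cmod (F (a i)) powr p) = (\<Sum>i<k. \<Sum>a\<in>T. cmod (F (a i)) powr p)"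
      by (rule sum.swap)
    also have "\<dots> = (\<Sum>i<k. real (card S) ^ (k - 1) * (\<Sum>s\<in>S. cmod (F s) powr p))"
      unfolding T_def by (intro sum.cong refl) (simp add: sum_tuples_coordinate[OF S, where G="\<lambda>s. cmod (F s) powr p"])
    finally show ?thesis
      using S by (simp add: M_def T_def card_tuples)
  qed
  have "(\<Sum>z\<in>T \<times> T. \<Sum>i<k. cmod (F (fst z i) - F (snd z i)) powr p)
      \<le> (\<Sum>z\<in>T \<times> T. \<Sum>i<k. 2 powr (p - 1) * (cmod (F (fst z i)) powr p + cmod (F (snd z i)) powr p))"
    using cmod_add_powr_le[OF p, of "F (fst _ _)" "- F (snd _ _)"] by (intro sum_mono) simp
  also have "\<dots> = 2 powr (p - 1) * ((\<Sum>z\<in>T \<times> T. \<Sum>i<k. cmod (F (fst z i)) powr p)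
      + (\<Sum>z\<in>T \<times> T. \<Sum>i<k. cmod (F (snd z i)) powr p))"
    by (simp only: sum.distrib distrib_left sum_distrib_left)
  also have "\<dots> = 2 powr (p - 1) * (2 * M)"
    using coordinates by (simp add: sum_pairs_fst[where h="\<lambda>a. \<Sum>i<k. cmod (F (a i)) powr p"]
        sum_pairs_snd[where h="\<lambda>a. \<Sum>i<k. cmod (F (a i)) powr p"] mult.commute)
  also have "\<dots> = 2 powr p * M"
    using powr_add[of 2 "p - 1" 1] by simp
  finally show ?thesis
    by (simp add: T_def M_def mult.assoc)
qed

lemma sum_tuple_pairs_diff_moment_le:
  fixes F :: "'a \<Rightarrow> complex"
  assumes S: "finite S" and p: "p \<ge> 2"
  shows "(\<Sum>z\<in>tuples k S \<times> tuples k S. cmod (\<Sum>i<k. F (fst z i) - F (snd z i)) powr p)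
    \<le> 2 powr (2 * p + 1) * p powr (p / 2) * real k powr (p / 2) *
       real (card S) ^ k * real (card S) ^ (k - 1) * (\<Sum>s\<in>S. cmod (F s) powr p)"
proof -
  define M where "M = real (card S) ^ k * real (card S) ^ (k - 1) * (\<Sum>s\<in>S. cmod (F s) powr p)"
  have "(\<Sum>z\<in>tuples k S \<times> tuples k S. \<Sum>i<k. cmod (F (fst z i) - F (snd z i)) powr p)
      \<le> 2 powr p * real k * M"
    unfolding M_def using sum_tuple_pairs_coordinate_le[OF S, where p=p and k=k and F=F] p by (simp add: mult.assoc)
  then have "(\<Sum>z\<in>tuples k S \<times> tuples k S. cmod (\<Sum>i<k. F (fst z i) - F (snd z i)) powr p)
      \<le> 2 powr (p + 1) * p powr (p / 2) * real k powr (p / 2 - 1) * (2 powr p * real k * M)"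
    using sum_tuple_pairs_moment_le[OF p, where F=F and k=k and S=S]
    by (meson order_trans mult_left_mono powr_ge_zero zero_le_mult_iff)
  also have "\<dots> = (2 powr (p + 1) * 2 powr p) * p powr (p / 2) * (real k powr (p / 2 - 1) * real k) * M"
    by (simp only: mult_ac)
  also have "\<dots> = 2 powr (2 * p + 1) * p powr (p / 2) * real k powr (p / 2) * M"
  proof -
    have "2 powr (p + 1) * 2 powr p = (2::real) powr (2 * p + 1)"
      using powr_add[of 2 "p + 1" p] by (simp add: add.commute add.left_commute)
    moreover have "real k powr (p / 2 - 1) * real k = real k powr (p / 2)"
      using powr_add[of "real k" "p / 2 - 1" 1] by (cases "k = 0") simp_all
    ultimately show ?thesis
      by simp
  qed
  finally show ?thesis
    by (simp add: M_def mult.assoc)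
qed

lemma cmod_sub_mean_powr_le:
  fixes y :: "'i \<Rightarrow> complex"
  assumes p: "p \<ge> 1" and T: "finite T" "T \<noteq> {}"
  shows "cmod (x - (\<Sum>t\<in>T. y t) / of_nat (card T)) powr p \<le> (\<Sum>t\<in>T. cmod (x - y t) powr p) / real (card T)"
proof -
  have c: "card T > 0"
    using T by (simp add: card_gt_0_iff)
  have "(\<Sum>t\<in>T. of_real (1 / real (card T)) * (x - y t))
      = of_real (1 / real (card T)) * (of_nat (card T) * x - (\<Sum>t\<in>T. y t))"
    by (simp add: sum_divide_distrib[symmetric] sum_subtractf)
  also have "\<dots> = x - (\<Sum>t\<in>T. y t) / of_nat (card T)"
    using c by (simp add: field_simps)
  finally have "x - (\<Sum>t\<in>T. y t) / of_nat (card T) = (\<Sum>t\<in>T. of_real (1 / real (card T)) * (x - y t))"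
    by simp
  also have "cmod \<dots> powr p \<le> (\<Sum>t\<in>T. 1 / real (card T) * cmod (x - y t) powr p)"
    by (rule cmod_convex_comb_powr_le[OF p T(1)]) (use c in auto)
  finally show ?thesis
    by (simp add: sum_divide_distrib)
qed

lemma sum_tuples_sample_mean:
  fixes F :: "'a \<Rightarrow> complex"
  assumes S: "finite S" "S \<noteq> {}" and k: "k \<ge> 1"
  shows "(\<Sum>a\<in>tuples k S. (\<Sum>i<k. F (a i)) / of_nat k) / of_nat (card (tuples k S))
    = (\<Sum>s\<in>S. F s) / of_nat (card S)"
proof -
  have n: "card S > 0"
    using S by (simp add: card_gt_0_iff)
  have "(\<Sum>a\<in>tuples k S. \<Sum>i<k. F (a i)) = (\<Sum>i<k. \<Sum>a\<in>tuples k S. F (a i))"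
    by (rule sum.swap)
  also have "\<dots> = (\<Sum>i<k. of_nat (card S) ^ (k - 1) * (\<Sum>s\<in>S. F s))"
    by (intro sum.cong refl) (simp add: sum_tuples_coordinate[OF S(1), where G=F])
  finally have "(\<Sum>a\<in>tuples k S. (\<Sum>i<k. F (a i)) / of_nat k) = of_nat (card S) ^ (k - 1) * (\<Sum>s\<in>S. F s)"
    using k by (simp add: sum_divide_distrib[symmetric])
  moreover have "(of_nat (card (tuples k S)) :: complex) = of_nat (card S) * of_nat (card S) ^ (k - 1)"
    using k S by (cases k) (auto simp: card_tuples)
  ultimately show ?thesis
    using n by simp
qed

lemma card_le_double_card_sublevel:
  fixes g :: "'a \<Rightarrow> real"
  assumes A: "finite A" and g: "\<And>a. a \<in> A \<Longrightarrow> g a \<ge> 0" and M: "M \<ge> 0"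
    and sum: "(\<Sum>a\<in>A. g a) \<le> real (card A) * M / 2"
  shows "card A \<le> 2 * card {a \<in> A. g a \<le> M}"
proof -
  define G where "G = {a \<in> A. g a \<le> M}"
  have GA: "G \<subseteq> A"
    by (auto simp: G_def)
  have "M * real (card (A - G)) = (\<Sum>a\<in>A - G. M)"
    by simp
  also have "\<dots> \<le> (\<Sum>a\<in>A - G. g a)"
    by (rule sum_mono) (auto simp: G_def)
  also have "\<dots> \<le> (\<Sum>a\<in>A. g a)"
    using A g by (intro sum_mono2) auto
  finally have bound: "M * real (card (A - G)) \<le> real (card A) * M / 2"
    using sum by linarith
  have split: "card A = card G + card (A - G)"
    using A GA by (metis card_Diff_subset card_mono finite_subset le_add_diff_inverse)
  show ?thesis
  proof (cases "M = 0")
    case True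
    have "g a \<le> 0" if "a \<in> A" for a
      using member_le_sum[of a A g] that A g sum True by auto
    then have "G = A"
      using True by (auto simp: G_def)
    then show ?thesis
      by (simp add: G_def)
  next
    case False
    then have "real (card (A - G)) \<le> real (card A) / 2"
      using bound M by (simp add: field_simps)
    then show ?thesis
      using split unfolding G_def by linarith
  qed
qed

definition sampling_const :: "real \<Rightarrow> nat \<Rightarrow> real" where
  "sampling_const p k = 2 powr (2 * p + 1) * p powr (p / 2) * real k powr (- p / 2)"

lemma sum_tuples_sample_mean_moment_le:
  fixes F :: "'a \<Rightarrow> complex"
  assumes S: "finite S" "S \<noteq> {}" and k: "k \<ge> 1" and p: "p \<ge> 2"
  shows "(\<Sum>a\<in>tuples k S. cmod ((\<Sum>i<k. F (a i)) / of_nat k - (\<Sum>s\<in>S. F s) / of_nat (card S)) powr p)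
    \<le> real (card S) ^ k * sampling_const p k * ((\<Sum>s\<in>S. cmod (F s) powr p) / real (card S))"
proof -
  define n where "n = card S"
  define T where "T = tuples k S"
  define A where "A a = (\<Sum>i<k. F (a i))" for a
  define PF where "PF = (\<Sum>s\<in>S. cmod (F s) powr p)"
  have n: "n > 0" and cT: "card T = n ^ k"
    using S by (simp_all add: n_def T_def card_gt_0_iff card_tuples)
  have k0: "real k > 0"
    using k by simp
  have "(\<Sum>a\<in>T. cmod (A a / of_nat k - (\<Sum>s\<in>S. F s) / of_nat n) powr p)
      \<le> (\<Sum>a\<in>T. (\<Sum>a'\<in>T. cmod (A a / of_nat k - A a' / of_nat k) powr p) / real (card T))"
    unfolding sum_tuples_sample_mean[OF S k, symmetric] A_def T_def n_def
    using p S cT n by (intro sum_mono cmod_sub_mean_powr_le) (auto simp: T_def)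
  also have "\<dots> = real k powr (- p) / real (card T) *
      (\<Sum>z\<in>T \<times> T. cmod (\<Sum>i<k. F (fst z i) - F (snd z i)) powr p)"
  proof -
    have "cmod (A a / of_nat k - A a' / of_nat k) powr p = real k powr (- p) * cmod (A a - A a') powr p" for a a'
      using k0 by (simp add: diff_divide_distrib[symmetric] norm_divide powr_divide powr_minus_divide)
    then have "(\<Sum>a\<in>T. (\<Sum>a'\<in>T. cmod (A a / of_nat k - A a' / of_nat k) powr p) / real (card T))
        = real k powr (- p) / real (card T) * (\<Sum>a\<in>T. \<Sum>a'\<in>T. cmod (A a - A a') powr p)"
      by (simp add: sum_divide_distrib sum_distrib_left)
    also have "(\<Sum>a\<in>T. \<Sum>a'\<in>T. cmod (A a - A a') powr p)
        = (\<Sum>z\<in>T \<times> T. cmod (\<Sum>i<k. F (fst z i) - F (snd z i)) powr p)"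
      by (subst sum.cartesian_product) (simp add: A_def sum_subtractf case_prod_beta)
    finally show ?thesis .
  qed
  also have "\<dots> \<le> real k powr (- p) / real (card T) * (2 powr (2 * p + 1) * p powr (p / 2) *
      real k powr (p / 2) * real n ^ k * real n ^ (k - 1) * PF)"
    unfolding T_def n_def PF_def by (intro mult_left_mono sum_tuple_pairs_diff_moment_le S p) simp
  also have "\<dots> = real n ^ k * sampling_const p k * (PF / real n)"
  proof -
    have "real k powr (- p) * real k powr (p / 2) = real k powr (- p / 2)"
      using powr_add[of "real k" "- p" "p / 2"] by simp
    moreover have "real n ^ k = real n * real n ^ (k - 1)"
      using k by (cases k) auto
    ultimately show ?thesis
      using n cT by (simp add: sampling_const_def field_simps)
  qed
  finally show ?thesis
    by (simp add: T_def A_def n_def PF_def)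
qed

section \<open>Convolution on \<open>\<int>/N\<int>\<close>\<close>

lemma finite_ZN [simp]: "finite (ZN N)"
  by (simp add: ZN_def)

lemma mod_in_ZN [simp]: "N \<ge> 1 \<Longrightarrow> x mod int N \<in> ZN N"
  by (simp add: ZN_def)

lemma ZN_mod [simp]: "y \<in> ZN N \<Longrightarrow> y mod int N = y"
  by (simp add: ZN_def)

lemma sum_ZN_translate:
  assumes "N \<ge> 1"
  shows "(\<Sum>y\<in>ZN N. F ((y + c) mod int N)) = (\<Sum>y\<in>ZN N. (F y :: 'a::comm_monoid_add))"
  by (rule sum.reindex_bij_witness[where i="\<lambda>y. (y - c) mod int N" and j="\<lambda>y. (y + c) mod int N"])
     (use assms in \<open>auto simp: mod_simps\<close>)

lemma sum_ZN_reflect: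
  assumes "N \<ge> 1"
  shows "(\<Sum>y\<in>ZN N. F ((c - y) mod int N)) = (\<Sum>y\<in>ZN N. (F y :: 'a::comm_monoid_add))"
  by (rule sum.reindex_bij_witness[where i="\<lambda>y. (c - y) mod int N" and j="\<lambda>y. (c - y) mod int N"])
     (use assms in \<open>auto simp: mod_simps\<close>)

lemma conv_commute:
  assumes N: "N \<ge> 1"
  shows "conv N f g x = conv N g f x"
proof -
  have "(\<Sum>y\<in>ZN N. f y * g ((x - y) mod int N))
      = (\<Sum>y\<in>ZN N. f ((x - y) mod int N) * g ((x - (x - y) mod int N) mod int N))"
    using sum_ZN_reflect[OF N, of "\<lambda>y. f y * g ((x - y) mod int N)" x] by simp
  also have "\<dots> = (\<Sum>y\<in>ZN N. g y * f ((x - y) mod int N))"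
    by (intro sum.cong) (auto simp: mod_simps)
  finally show ?thesis
    unfolding conv_def by simp
qed

lemma conv_assoc:
  assumes N: "N \<ge> 1"
  shows "conv N (conv N f g) h x = conv N f (conv N g h) x"
proof -
  have inner: "(\<Sum>y\<in>ZN N. g ((y - z) mod int N) * h ((x - y) mod int N))
      = (\<Sum>w\<in>ZN N. g w * h ((x - z - w) mod int N))" for z
    using sum_ZN_translate[OF N, of "\<lambda>y. g ((y - z) mod int N) * h ((x - y) mod int N)" z]
    by (simp add: mod_simps algebra_simps)
  have "conv N (conv N f g) h x = (1 / of_nat N) * (1 / of_nat N) *
      (\<Sum>y\<in>ZN N. \<Sum>z\<in>ZN N. f z * (g ((y - z) mod int N) * h ((x - y) mod int N)))"
    unfolding conv_def by (simp add: sum_distrib_left sum_distrib_right algebra_simps)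
  also have "\<dots> = (1 / of_nat N) * (1 / of_nat N) *
      (\<Sum>z\<in>ZN N. f z * (\<Sum>y\<in>ZN N. g ((y - z) mod int N) * h ((x - y) mod int N)))"
    by (subst sum.swap) (simp add: sum_distrib_left)
  also have "\<dots> = conv N f (conv N g h) x"
    unfolding conv_def inner by (simp add: sum_distrib_left algebra_simps mod_simps)
  finally show ?thesis .
qed

lemma conv_diff_left: "conv N (\<lambda>x. u x - v x) w x = conv N u w x - conv N v w x"
  unfolding conv_def by (simp add: sum_subtractf left_diff_distrib right_diff_distrib)

lemma conv_mu:
  assumes N: "N \<ge> 1" and Y: "Y \<subseteq> ZN N"
  shows "conv N h (mu N Y) x = (\<Sum>t\<in>Y. h ((x - t) mod int N)) / of_nat (card Y)"
proof -
  have "(\<Sum>y\<in>ZN N. h y * mu N Y ((x - y) mod int N)) = (\<Sum>t\<in>ZN N. h ((x - t) mod int N) * mu N Y t)"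
    using sum_ZN_reflect[OF N, of "\<lambda>y. h y * mu N Y ((x - y) mod int N)" x]
    by (simp add: mod_simps cong: sum.cong)
  also have "\<dots> = (\<Sum>t\<in>Y. h ((x - t) mod int N) * mu N Y t)"
    by (rule sum.mono_neutral_right[OF finite_ZN Y]) (simp add: mu_def)
  also have "\<dots> = (\<Sum>t\<in>Y. h ((x - t) mod int N)) * of_nat N / of_nat (card Y)"
    by (simp add: mu_def sum_distrib_right sum_divide_distrib)
  finally show ?thesis
    unfolding conv_def using N by simp
qed

lemma conv_conv_pow_0:
  assumes N: "N \<ge> 1" and x: "x \<in> ZN N"
  shows "conv N g (conv_pow N h 0) x = g x"
proof -
  have "(x - y) mod int N = 0 \<longleftrightarrow> y = x" if "y \<in> ZN N" for y
    using x that by (metis ZN_mod mod_0 mod_eq_dvd_iff dvd_eq_mod_eq_0 eq_iff_diff_eq_0)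
  then have "(\<Sum>y\<in>ZN N. g y * (if (x - y) mod int N = 0 then of_nat N else 0))
      = (\<Sum>y\<in>ZN N. if y = x then g y * of_nat N else 0)"
    by (intro sum.cong) auto
  also have "\<dots> = g x * of_nat N"
    using x by (simp add: sum.delta')
  finally show ?thesis
    unfolding conv_def using N by simp
qed

lemma negset_eq_image: "negset N X = (\<lambda>x. (- x) mod int N) ` X"
  by (auto simp: negset_def)

lemma inj_on_neg_mod: "inj_on (\<lambda>x. (- x) mod int N) (ZN N)"
proof (rule inj_onI)
  fix x y assume "x \<in> ZN N" "y \<in> ZN N" and "(- x) mod int N = (- y) mod int N"
  then have "(- ((- x) mod int N)) mod int N = (- ((- y) mod int N)) mod int N"
    by simp
  with \<open>x \<in> ZN N\<close> \<open>y \<in> ZN N\<close> show "x = y"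
    by (simp add: mod_simps)
qed

lemma conv_lam:
  assumes N: "N \<ge> 1" and X: "X \<subseteq> ZN N"
  shows "conv N g (lam N X) x = (\<Sum>t\<in>X. \<Sum>t'\<in>X. g ((x + t' - t) mod int N)) / (of_nat (card X))\<^sup>2"
proof -
  have inj: "inj_on (\<lambda>x. (- x) mod int N) X"
    using inj_on_subset[OF inj_on_neg_mod X] .
  have card_neg: "card (negset N X) = card X"
    unfolding negset_eq_image using inj by (rule card_image)
  have negset_ZN: "negset N X \<subseteq> ZN N"
    using N by (auto simp: negset_def)
  have "conv N g (lam N X) x = conv N (conv N g (mu N X)) (mu N (negset N X)) x"
    unfolding lam_def by (rule conv_assoc[OF N, symmetric])
  also have "\<dots> = (\<Sum>u\<in>negset N X. conv N g (mu N X) ((x - u) mod int N)) / of_nat (card X)"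
    by (simp add: conv_mu[OF N negset_ZN] card_neg)
  also have "\<dots> = (\<Sum>t'\<in>X. conv N g (mu N X) ((x - (- t') mod int N) mod int N)) / of_nat (card X)"
    by (simp add: negset_eq_image sum.reindex[OF inj])
  also have "\<dots> = (\<Sum>t'\<in>X. (\<Sum>t\<in>X. g ((x + t' - t) mod int N)) / of_nat (card X)) / of_nat (card X)"
    by (simp add: conv_mu[OF N X] mod_simps)
  finally show ?thesis
    by (subst sum.swap) (simp add: sum_divide_distrib[symmetric] power2_eq_square)
qed

text \<open>Densities are normalised to mean 1, like \<open>mu\<close>, so that convolving with one averages translates.\<close>

definition is_density :: "nat \<Rightarrow> (int \<Rightarrow> complex) \<Rightarrow> bool" where
  "is_density N w \<longleftrightarrow> (\<exists>r. (\<forall>x. r x \<ge> 0) \<and> w = (\<lambda>x. of_real (r x)) \<and> (\<Sum>x\<in>ZN N. r x) = real N)"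

lemma is_density_mu:
  assumes "Y \<subseteq> ZN N" "Y \<noteq> {}"
  shows "is_density N (mu N Y)"
  unfolding is_density_def
proof (intro exI conjI)
  let ?r = "\<lambda>x. if x \<in> Y then real N / real (card Y) else 0"
  have "card Y > 0"
    using assms finite_subset[OF assms(1) finite_ZN] by (simp add: card_gt_0_iff)
  moreover have "(\<Sum>x\<in>ZN N. ?r x) = (\<Sum>x\<in>Y. real N / real (card Y))"
    by (simp add: sum.If_cases inf.absorb2[OF assms(1)])
  ultimately show "(\<Sum>x\<in>ZN N. ?r x) = real N"
    by simp
qed (auto simp: mu_def)

lemma is_density_conv:
  assumes N: "N \<ge> 1" and "is_density N w1" "is_density N w2"
  shows "is_density N (conv N w1 w2)"
proof -
  obtain r1 where r1: "\<forall>x. r1 x \<ge> 0" "w1 = (\<lambda>x. of_real (r1 x))" "(\<Sum>x\<in>ZN N. r1 x) = real N"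
    using assms unfolding is_density_def by blast
  obtain r2 where r2: "\<forall>x. r2 x \<ge> 0" "w2 = (\<lambda>x. of_real (r2 x))" "(\<Sum>x\<in>ZN N. r2 x) = real N"
    using assms unfolding is_density_def by blast
  let ?r = "\<lambda>x. (1 / real N) * (\<Sum>y\<in>ZN N. r1 y * r2 ((x - y) mod int N))"
  show ?thesis
    unfolding is_density_def
  proof (intro exI conjI)
    show "\<forall>x. ?r x \<ge> 0"
      using r1(1) r2(1) by (auto intro!: sum_nonneg divide_nonneg_nonneg mult_nonneg_nonneg)
    show "conv N w1 w2 = (\<lambda>x. complex_of_real (?r x))"
      unfolding conv_def r1(2) r2(2) by (rule ext) simp
    have translate: "(\<Sum>x\<in>ZN N. r2 ((x - y) mod int N)) = real N" for y
      using sum_ZN_translate[OF N, of r2 "- y"] r2(3) by simp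
    have "(\<Sum>x\<in>ZN N. ?r x) = (1 / real N) * (\<Sum>x\<in>ZN N. \<Sum>y\<in>ZN N. r1 y * r2 ((x - y) mod int N))"
      by (simp add: sum_distrib_left)
    also have "\<dots> = (1 / real N) * (\<Sum>y\<in>ZN N. r1 y * (\<Sum>x\<in>ZN N. r2 ((x - y) mod int N)))"
      by (subst sum.swap) (simp add: sum_distrib_left)
    also have "\<dots> = real N"
      using r1(3) N by (simp add: translate sum_distrib_right[symmetric])
    finally show "(\<Sum>x\<in>ZN N. ?r x) = real N" .
  qed
qed

lemma is_density_conv_pow:
  assumes N: "N \<ge> 1" and w: "is_density N w"
  shows "is_density N (conv_pow N w n)"
proof (induction n)
  case 0
  have "0 \<in> ZN N"
    using N by (simp add: ZN_def)
  then show ?case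
    unfolding is_density_def
    by (intro exI[of _ "\<lambda>x. if x = 0 then real N else 0"]) (auto simp: sum.delta)
next
  case (Suc n)
  then show ?case
    using is_density_conv[OF N _ w] by simp
qed

lemma is_density_lam:
  assumes N: "N \<ge> 1" and X: "X \<subseteq> ZN N" "X \<noteq> {}"
  shows "is_density N (lam N X)"
proof -
  have "negset N X \<subseteq> ZN N" "negset N X \<noteq> {}"
    using N X by (auto simp: negset_def)
  then show ?thesis
    unfolding lam_def by (intro is_density_conv is_density_mu N X)
qed

definition Lp_sum :: "nat \<Rightarrow> real \<Rightarrow> (int \<Rightarrow> complex) \<Rightarrow> real" where
  "Lp_sum N p h = (\<Sum>x\<in>ZN N. cmod (h x) powr p)"

lemma Lp_sum_nonneg: "Lp_sum N p h \<ge> 0"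
  unfolding Lp_sum_def by (simp add: sum_nonneg)

lemma Lp_sum_translate:
  assumes "N \<ge> 1"
  shows "Lp_sum N p (\<lambda>x. h ((x + c) mod int N)) = Lp_sum N p h"
  unfolding Lp_sum_def using sum_ZN_translate[OF assms, of "\<lambda>y. cmod (h y) powr p" c] by simp

lemma Lp_norm_le_if_Lp_sum_le:
  assumes "\<theta> > 0" "p > 0" "Lp_sum N p h \<le> \<theta> powr p * Lp_sum N p f"
  shows "Lp_norm N p h \<le> \<theta> * Lp_norm N p f"
proof -
  have "Lp_norm N p h = ((1 / real N) * Lp_sum N p h) powr (1 / p)"
    by (simp add: Lp_norm_def Lp_sum_def)
  also have "\<dots> \<le> ((1 / real N) * (\<theta> powr p * Lp_sum N p f)) powr (1 / p)"
    using assms Lp_sum_nonneg[of N p h] by (intro powr_mono2 mult_left_mono) auto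
  also have "\<dots> = (\<theta> powr p) powr (1 / p) * ((1 / real N) * Lp_sum N p f) powr (1 / p)"
    using assms Lp_sum_nonneg[of N p f] by (simp add: powr_mult[symmetric] algebra_simps)
  also have "\<dots> = \<theta> * Lp_norm N p f"
    using assms by (simp add: powr_powr Lp_norm_def Lp_sum_def)
  finally show ?thesis .
qed

lemma Lp_sum_conv_density_le:
  assumes N: "N \<ge> 1" and p: "p \<ge> 1" and w: "is_density N w"
  shows "Lp_sum N p (conv N h w) \<le> Lp_sum N p h"
proof -
  obtain r where r: "\<forall>x. r x \<ge> 0" "w = (\<lambda>x. of_real (r x))" "(\<Sum>x\<in>ZN N. r x) = real N"
    using w unfolding is_density_def by blast
  have pointwise: "cmod (conv N h w x) powr p \<le> (\<Sum>y\<in>ZN N. r ((x - y) mod int N) / real N * cmod (h y) powr p)"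
    for x
  proof -
    have eq: "conv N h w x = (\<Sum>y\<in>ZN N. of_real (r ((x - y) mod int N) / real N) * h y)"
      unfolding conv_def r by (simp add: sum_distrib_left algebra_simps)
    have "(\<Sum>y\<in>ZN N. r ((x - y) mod int N) / real N) = 1"
      using sum_ZN_reflect[OF N, of r x] r(3) N by (simp flip: sum_divide_distrib)
    then have "cmod (\<Sum>y\<in>ZN N. of_real (r ((x - y) mod int N) / real N) * h y) powr p
        \<le> (\<Sum>y\<in>ZN N. r ((x - y) mod int N) / real N * cmod (h y) powr p)"
      using r(1) by (intro cmod_convex_comb_powr_le[OF p finite_ZN]) auto
    then show ?thesis
      unfolding eq .
  qed
  have "Lp_sum N p (conv N h w) \<le> (\<Sum>x\<in>ZN N. \<Sum>y\<in>ZN N. r ((x - y) mod int N) / real N * cmod (h y) powr p)"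
    unfolding Lp_sum_def by (intro sum_mono pointwise)
  also have "\<dots> = (\<Sum>y\<in>ZN N. (\<Sum>x\<in>ZN N. r ((x - y) mod int N)) / real N * cmod (h y) powr p)"
    by (subst sum.swap) (simp add: sum_distrib_right sum_divide_distrib)
  also have "\<dots> = Lp_sum N p h"
  proof -
    have "(\<Sum>x\<in>ZN N. r ((x - y) mod int N)) = real N" for y
      using sum_ZN_translate[OF N, of r "- y"] r(3) by simp
    then show ?thesis
      using N by (simp add: Lp_sum_def)
  qed
  finally show ?thesis .
qed

lemma sub_conv_conv_pow_eq_sum:
  assumes N: "N \<ge> 1" and x: "x \<in> ZN N"
  shows "g x - conv N g (conv_pow N w l) x = (\<Sum>j<l. conv N (\<lambda>y. g y - conv N g w y) (conv_pow N w j) x)"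
proof -
  define G where "G j = conv N g (conv_pow N w j) x" for j
  have "conv N (\<lambda>y. g y - conv N g w y) (conv_pow N w j) x = G j - G (Suc j)" for j
  proof -
    have "conv N (conv_pow N w j) w = conv N w (conv_pow N w j)"
      by (rule ext) (rule conv_commute[OF N])
    then have "G (Suc j) = conv N g (conv N w (conv_pow N w j)) x"
      by (simp add: G_def)
    also have "\<dots> = conv N (conv N g w) (conv_pow N w j) x"
      by (rule conv_assoc[OF N, symmetric])
    finally show ?thesis
      by (simp add: G_def conv_diff_left)
  qed
  then have "(\<Sum>j<l. conv N (\<lambda>y. g y - conv N g w y) (conv_pow N w j) x) = G 0 - G l"
    by (simp add: sum_lessThan_telescope')
  then show ?thesis
    using conv_conv_pow_0[OF N x] by (simp add: G_def)
qed

lemma Lp_sum_sub_conv_pow_le: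
  assumes N: "N \<ge> 1" and p: "p \<ge> 1" and w: "is_density N w"
  shows "Lp_sum N p (\<lambda>x. g x - conv N g (conv_pow N w l) x)
    \<le> real l powr p * Lp_sum N p (\<lambda>x. g x - conv N g w x)"
proof -
  define H where "H j = conv N (\<lambda>x. g x - conv N g w x) (conv_pow N w j)" for j
  have "Lp_sum N p (\<lambda>x. g x - conv N g (conv_pow N w l) x) = (\<Sum>x\<in>ZN N. cmod (\<Sum>j<l. H j x) powr p)"
    unfolding Lp_sum_def H_def by (intro sum.cong refl) (simp add: sub_conv_conv_pow_eq_sum[OF N])
  also have "\<dots> \<le> (\<Sum>x\<in>ZN N. real l powr (p - 1) * (\<Sum>j<l. cmod (H j x) powr p))"
    using cmod_sum_powr_le[OF p, of "{..<l}"] by (intro sum_mono) simp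
  also have "\<dots> = real l powr (p - 1) * (\<Sum>j<l. Lp_sum N p (H j))"
    unfolding Lp_sum_def by (simp add: sum_distrib_left sum.swap[of _ "ZN N" "{..<l}"])
  also have "\<dots> \<le> real l powr (p - 1) * (\<Sum>j<l. Lp_sum N p (\<lambda>x. g x - conv N g w x))"
    unfolding H_def
    by (intro mult_left_mono sum_mono Lp_sum_conv_density_le N p is_density_conv_pow w) auto
  also have "\<dots> = real l powr p * Lp_sum N p (\<lambda>x. g x - conv N g w x)"
  proof -
    have "real l powr (p - 1) * real l = real l powr p"
      using powr_add[of "real l" "p - 1" 1] by (cases "l = 0") simp_all
    then show ?thesis
      by (simp add: mult.assoc[symmetric])
  qed
  finally show ?thesis .
qed

section \<open>Almost periods\<close>

definition sample_avg :: "nat \<Rightarrow> (int \<Rightarrow> complex) \<Rightarrow> nat \<Rightarrow> (nat \<Rightarrow> int) \<Rightarrow> int \<Rightarrow> complex" where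
  "sample_avg N f k a x = (\<Sum>i<k. f ((x - a i) mod int N)) / of_nat k"

lemma sum_tuples_Lp_sum_sample_avg_le:
  assumes N: "N \<ge> 1" and S: "S \<subseteq> ZN N" "S \<noteq> {}" and k: "k \<ge> 1" and p: "p \<ge> 2"
  shows "(\<Sum>a\<in>tuples k S. Lp_sum N p (\<lambda>x. sample_avg N f k a x - conv N f (mu N S) x))
    \<le> real (card S) ^ k * sampling_const p k * Lp_sum N p f"
proof -
  have fS: "finite S"
    using finite_subset[OF S(1) finite_ZN] .
  define n where "n = card S"
  have n: "n > 0"
    using fS S by (simp add: n_def card_gt_0_iff)
  have "(\<Sum>a\<in>tuples k S. Lp_sum N p (\<lambda>x. sample_avg N f k a x - conv N f (mu N S) x))
      = (\<Sum>x\<in>ZN N. \<Sum>a\<in>tuples k S. cmod (sample_avg N f k a x - conv N f (mu N S) x) powr p)"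
    unfolding Lp_sum_def by (rule sum.swap)
  also have "\<dots> \<le> (\<Sum>x\<in>ZN N. real n ^ k * sampling_const p k *
      ((\<Sum>s\<in>S. cmod (f ((x - s) mod int N)) powr p) / real n))"
    using sum_tuples_sample_mean_moment_le[OF fS S(2) k p, of "\<lambda>s. f ((_ - s) mod int N)"]
    by (intro sum_mono) (simp add: sample_avg_def conv_mu[OF N S(1)] n_def)
  also have "\<dots> = real n ^ k * sampling_const p k *
      ((\<Sum>s\<in>S. \<Sum>x\<in>ZN N. cmod (f ((x - s) mod int N)) powr p) / real n)"
    by (subst sum.swap) (simp add: sum_distrib_left sum_divide_distrib)
  also have "\<dots> = real n ^ k * sampling_const p k * Lp_sum N p f"
  proof -
    have "(\<Sum>x\<in>ZN N. cmod (f ((x - s) mod int N)) powr p) = Lp_sum N p f" for s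
      using Lp_sum_translate[OF N, of p f "- s"] by (simp add: Lp_sum_def)
    then show ?thesis
      using n by (simp add: n_def)
  qed
  finally show ?thesis
    by (simp add: n_def)
qed

lemma card_good_samples:
  assumes N: "N \<ge> 1" and S: "S \<subseteq> ZN N" "S \<noteq> {}" and k: "k \<ge> 1" and p: "p \<ge> 2"
    and cond: "sampling_const p k \<le> \<epsilon> powr p / 2"
  shows "card S ^ k \<le> 2 * card {a \<in> tuples k S.
    Lp_sum N p (\<lambda>x. sample_avg N f k a x - conv N f (mu N S) x) \<le> \<epsilon> powr p * Lp_sum N p f}"
proof -
  have fS: "finite S"
    using finite_subset[OF S(1) finite_ZN] .
  have "real (card S) ^ k * sampling_const p k * Lp_sum N p f \<le> real (card S) ^ k * (\<epsilon> powr p / 2 * Lp_sum N p f)"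
    unfolding mult.assoc by (intro mult_left_mono mult_right_mono[OF cond Lp_sum_nonneg]) simp
  then have "(\<Sum>a\<in>tuples k S. Lp_sum N p (\<lambda>x. sample_avg N f k a x - conv N f (mu N S) x))
      \<le> real (card S) ^ k * (\<epsilon> powr p / 2 * Lp_sum N p f)"
    using sum_tuples_Lp_sum_sample_avg_le[OF N S k p, of f] by linarith
  then have "card (tuples k S) \<le> 2 * card {a \<in> tuples k S.
      Lp_sum N p (\<lambda>x. sample_avg N f k a x - conv N f (mu N S) x) \<le> \<epsilon> powr p * Lp_sum N p f}"
    using fS by (intro card_le_double_card_sublevel) (auto simp: card_tuples Lp_sum_nonneg)
  then show ?thesis
    using fS by (simp add: card_tuples)
qed

lemma inj_on_snd_translate_fibre:
  assumes S: "S \<subseteq> ZN N" and G: "G \<subseteq> tuples k S"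
  shows "inj_on snd {z \<in> G \<times> T. restrict (\<lambda>i. (fst z i + snd z) mod int N) {..<k} = b}"
proof (rule inj_onI)
  fix z z' assume z: "z \<in> {z \<in> G \<times> T. restrict (\<lambda>i. (fst z i + snd z) mod int N) {..<k} = b}"
    and z': "z' \<in> {z \<in> G \<times> T. restrict (\<lambda>i. (fst z i + snd z) mod int N) {..<k} = b}"
    and t: "snd z = snd z'"
  have tuples: "fst z \<in> tuples k S" "fst z' \<in> tuples k S"
    using z z' G by auto
  \<comment> \<open>\<open>a i\<close> is recovered from \<open>b i\<close> as \<open>(b i - t) mod N\<close>\<close>
  have "fst z i = fst z' i" for i
  proof (cases "i < k")
    case True
    have "(fst z i + snd z) mod int N = (fst z' i + snd z) mod int N"
      using z z' t True by (auto dest!: fun_cong[of _ _ i])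
    then have "((fst z i + snd z) mod int N - snd z) mod int N
        = ((fst z' i + snd z) mod int N - snd z) mod int N"
      by simp
    then have "fst z i mod int N = fst z' i mod int N"
      by (simp add: mod_simps)
    moreover have "fst z i \<in> S" "fst z' i \<in> S"
      using tuples True by (auto simp: tuples_def PiE_iff)
    ultimately show ?thesis
      using S by (metis ZN_mod subsetD)
  next
    case False
    then show ?thesis
      using tuples by (simp add: tuples_def PiE_def extensional_def)
  qed
  then show "z = z'"
    using t by (simp add: prod_eq_iff fun_eq_iff)
qed

lemma exists_large_translate_fibre:
  assumes N: "N \<ge> 1" and S: "S \<subseteq> ZN N" "S \<noteq> {}" and T: "T \<subseteq> ZN N" "T \<noteq> {}"
    and G: "G \<subseteq> tuples k S"
  shows "\<exists>b. card G * card T \<le> card {z \<in> G \<times> T. restrict (\<lambda>i. (fst z i + snd z) mod int N) {..<k} = b}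
    * card (tuples k (sumset N S T))"
proof -
  have fG: "finite G" and fT: "finite T"
    using finite_subset[OF G finite_tuples] finite_subset[OF S(1) finite_ZN] finite_subset[OF T(1) finite_ZN]
    by auto
  have SS: "sumset N S T \<subseteq> ZN N" and neSS: "sumset N S T \<noteq> {}"
    using N S T by (auto simp: sumset_def)
  define B where "B = tuples k (sumset N S T)"
  have fB: "finite B" and neB: "B \<noteq> {}"
    using finite_subset[OF SS finite_ZN] neSS by (simp_all add: B_def tuples_def PiE_eq_empty_iff finite_PiE)
  define \<phi> where "\<phi> z = restrict (\<lambda>i. (fst z i + snd z) mod int N) {..<k}" for z :: "(nat \<Rightarrow> int) \<times> int"
  have "\<phi> \<in> G \<times> T \<rightarrow> B"
  proof
    fix z assume z: "z \<in> G \<times> T"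
    then have "fst z \<in> tuples k S"
      using G by auto
    then have "fst z i \<in> S" "snd z \<in> T" if "i < k" for i
      using that z by (auto simp: tuples_def PiE_iff)
    then show "\<phi> z \<in> B"
      by (auto simp: \<phi>_def B_def tuples_def sumset_def)
  qed
  then obtain b where "card (G \<times> T) \<le> card (\<phi> -` {b} \<inter> G \<times> T) * card B"
    using pigeonhole_card[OF _ finite_cartesian_product[OF fG fT] fB neB] by blast
  moreover have "\<phi> -` {b} \<inter> G \<times> T = {z \<in> G \<times> T. \<phi> z = b}"
    by auto
  ultimately show ?thesis
    by (auto simp: \<phi>_def B_def card_cartesian_product)
qed

lemma exists_common_translates:
  assumes N: "N \<ge> 1" and S: "S \<subseteq> ZN N" "S \<noteq> {}" and T: "T \<subseteq> ZN N" "T \<noteq> {}"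
    and G: "G \<subseteq> tuples k S" "card S ^ k \<le> 2 * card G"
    and ST: "real (card (sumset N S T)) \<le> L * real (card S)"
  shows "\<exists>b X. X \<subseteq> T \<and> real (card T) \<le> real (card X) * (2 * L ^ k) \<and>
    (\<forall>t\<in>X. \<exists>a\<in>G. \<forall>i<k. (a i + t) mod int N = b i)"
proof -
  obtain b where fibre: "card G * card T \<le> card {z \<in> G \<times> T. restrict (\<lambda>i. (fst z i + snd z) mod int N) {..<k} = b}
      * card (tuples k (sumset N S T))"
    using exists_large_translate_fibre[OF N S T G(1)] by blast
  define F where "F = {z \<in> G \<times> T. restrict (\<lambda>i. (fst z i + snd z) mod int N) {..<k} = b}"
  define X where "X = snd ` F"
  have "card G * card T \<le> card X * card (tuples k (sumset N S T))"
    using fibre inj_on_snd_translate_fibre[OF S(1) G(1), of T b] by (simp add: X_def F_def card_image)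
  then have fibre_real: "real (card G) * real (card T) \<le> real (card X) * real (card (tuples k (sumset N S T)))"
    by (simp only: of_nat_mult[symmetric] of_nat_le_iff)
  have "finite (sumset N S T)"
    using N by (intro finite_subset[OF _ finite_ZN[of N]]) (auto simp: sumset_def)
  then have card_B: "real (card (tuples k (sumset N S T))) \<le> L ^ k * real (card S) ^ k"
    using power_mono[OF ST, of k] by (simp add: card_tuples power_mult_distrib)
  have "real (card S) ^ k * real (card T) \<le> 2 * real (card G) * real (card T)"
    using G(2) by (intro mult_right_mono) (simp_all flip: of_nat_power)
  also have "\<dots> \<le> 2 * (real (card X) * (L ^ k * real (card S) ^ k))"
    using fibre_real card_B by (simp add: mult.assoc order_trans mult_left_mono)
  finally have "real (card S) ^ k * real (card T) \<le> real (card S) ^ k * (real (card X) * (2 * L ^ k))"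
    by (simp only: mult_ac)
  then have size: "real (card T) \<le> real (card X) * (2 * L ^ k)"
    by (rule mult_left_le_imp_le) (use S finite_subset[OF S(1) finite_ZN] in \<open>simp add: card_gt_0_iff\<close>)
  have "\<exists>a\<in>G. \<forall>i<k. (a i + t) mod int N = b i" if "t \<in> X" for t
  proof -
    obtain a where "(a, t) \<in> F"
      using \<open>t \<in> X\<close> by (auto simp: X_def)
    then show ?thesis
      by (auto simp: F_def)
  qed
  moreover have "X \<subseteq> T"
    by (auto simp: X_def F_def)
  ultimately show ?thesis
    using size by blast
qed

lemma sample_avg_translate:
  assumes "\<forall>i<k. (a i + t) mod int N = b i"
  shows "sample_avg N f k a x = sample_avg N f k b ((x + t) mod int N)"
  unfolding sample_avg_def
proof (intro arg_cong2[where f="(/)"] sum.cong refl)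
  fix i assume "i \<in> {..<k}"
  then have "b i = (a i + t) mod int N"
    using assms by simp
  then show "f ((x - a i) mod int N) = f (((x + t) mod int N - b i) mod int N)"
    by (simp add: mod_simps)
qed

lemma Lp_sum_translate_diff_le:
  assumes N: "N \<ge> 1" and p: "p \<ge> 1"
    and t: "Lp_sum N p (\<lambda>y. u ((y + t) mod int N) - g y) \<le> B"
    and t': "Lp_sum N p (\<lambda>y. u ((y + t') mod int N) - g y) \<le> B"
  shows "Lp_sum N p (\<lambda>x. g x - g ((x + t' - t) mod int N)) \<le> 2 powr p * B"
proof -
  define h where "h s = (\<lambda>y. u ((y + s) mod int N) - g y)" for s
  have split: "g x - g ((x + t' - t) mod int N) = - h t' x + h t ((x + (t' - t)) mod int N)" for x
    by (simp add: h_def mod_simps algebra_simps)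
  have "Lp_sum N p (\<lambda>x. g x - g ((x + t' - t) mod int N))
      \<le> (\<Sum>x\<in>ZN N. 2 powr (p - 1) * (cmod (h t' x) powr p + cmod (h t ((x + (t' - t)) mod int N)) powr p))"
    unfolding Lp_sum_def split using cmod_add_powr_le[OF p] by (intro sum_mono) (metis norm_minus_cancel)
  also have "\<dots> = 2 powr (p - 1) * (Lp_sum N p (h t') + Lp_sum N p (\<lambda>x. h t ((x + (t' - t)) mod int N)))"
    unfolding Lp_sum_def by (simp only: sum.distrib distrib_left sum_distrib_left)
  also have "\<dots> = 2 powr (p - 1) * (Lp_sum N p (h t') + Lp_sum N p (h t))"
    by (simp add: Lp_sum_translate[OF N])
  also have "\<dots> \<le> 2 powr (p - 1) * (2 * B)"
    using t t' by (intro mult_left_mono) (auto simp: h_def)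
  also have "\<dots> = 2 powr p * B"
    using powr_add[of 2 "p - 1" 1] by simp
  finally show ?thesis .
qed

lemma Lp_sum_sub_conv_lam_le:
  assumes N: "N \<ge> 1" and p: "p \<ge> 1" and X: "X \<subseteq> ZN N" "X \<noteq> {}"
    and pair: "\<And>t t'. t \<in> X \<Longrightarrow> t' \<in> X \<Longrightarrow> Lp_sum N p (\<lambda>x. g x - g ((x + t' - t) mod int N)) \<le> B"
  shows "Lp_sum N p (\<lambda>x. g x - conv N g (lam N X) x) \<le> B"
proof -
  have fX: "finite X"
    using finite_subset[OF X(1) finite_ZN] .
  define c where "c = real (card X)"
  have c: "c > 0"
    using fX X by (simp add: c_def card_gt_0_iff)
  have weights: "(\<Sum>z\<in>X \<times> X. 1 / c\<^sup>2) = 1"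
    using c by (simp add: card_cartesian_product c_def power2_eq_square)
  \<comment> \<open>\<open>g * \<lambda>\<^sub>X\<close> is the average of the translates \<open>g (x + t' - t)\<close> over \<open>t, t' \<in> X\<close>\<close>
  have pointwise: "cmod (g x - conv N g (lam N X) x) powr p
      \<le> (\<Sum>z\<in>X \<times> X. 1 / c\<^sup>2 * cmod (g x - g ((x + snd z - fst z) mod int N)) powr p)" for x
  proof -
    have "(\<Sum>z\<in>X \<times> X. of_real (1 / c\<^sup>2) * (g x - g ((x + snd z - fst z) mod int N)))
        = of_real (1 / c\<^sup>2) * (\<Sum>z\<in>X \<times> X. g x)
          - of_real (1 / c\<^sup>2) * (\<Sum>z\<in>X \<times> X. g ((x + snd z - fst z) mod int N))"
      by (simp only: sum_subtractf right_diff_distrib sum_distrib_left)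
    also have "of_real (1 / c\<^sup>2) * (\<Sum>z\<in>X \<times> X. g x) = g x"
      using c by (simp add: card_cartesian_product c_def power2_eq_square)
    also have "of_real (1 / c\<^sup>2) * (\<Sum>z\<in>X \<times> X. g ((x + snd z - fst z) mod int N)) = conv N g (lam N X) x"
      unfolding conv_lam[OF N X(1)] c_def by (subst sum.cartesian_product) (simp add: case_prod_beta)
    finally have "g x - conv N g (lam N X) x
        = (\<Sum>z\<in>X \<times> X. of_real (1 / c\<^sup>2) * (g x - g ((x + snd z - fst z) mod int N)))"
      by simp
    also have "cmod \<dots> powr p \<le> (\<Sum>z\<in>X \<times> X. 1 / c\<^sup>2 * cmod (g x - g ((x + snd z - fst z) mod int N)) powr p)"
      by (rule cmod_convex_comb_powr_le[OF p finite_cartesian_product[OF fX fX] _ weights]) simp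
    finally show ?thesis .
  qed
  have "Lp_sum N p (\<lambda>x. g x - conv N g (lam N X) x)
      \<le> (\<Sum>x\<in>ZN N. \<Sum>z\<in>X \<times> X. 1 / c\<^sup>2 * cmod (g x - g ((x + snd z - fst z) mod int N)) powr p)"
    unfolding Lp_sum_def by (intro sum_mono pointwise)
  also have "\<dots> = (\<Sum>z\<in>X \<times> X. 1 / c\<^sup>2 * Lp_sum N p (\<lambda>x. g x - g ((x + snd z - fst z) mod int N)))"
    unfolding Lp_sum_def by (subst sum.swap) (simp add: sum_distrib_left)
  also have "\<dots> \<le> (\<Sum>z\<in>X \<times> X. 1 / c\<^sup>2 * B)"
    using pair by (intro sum_mono mult_left_mono) auto
  also have "\<dots> = B"
    by (simp only: sum_distrib_right[symmetric] weights mult_1)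
  finally show ?thesis .
qed

lemma croot_sisask_almost_period:
  assumes N: "N \<ge> 1" and S: "S \<subseteq> ZN N" "S \<noteq> {}" and T: "T \<subseteq> ZN N" "T \<noteq> {}"
    and k: "k \<ge> 1" and p: "p \<ge> 2" and \<epsilon>: "\<epsilon> > 0" and cond: "sampling_const p k \<le> \<epsilon> powr p / 2"
    and ST: "real (card (sumset N S T)) \<le> L * real (card S)"
  shows "\<exists>X. X \<subseteq> T \<and> real (card T) \<le> real (card X) * (2 * L ^ k) \<and>
    Lp_sum N p (\<lambda>x. conv N f (mu N S) x - conv N (conv N f (mu N S)) (conv_pow N (lam N X) l) x)
      \<le> (2 * real l * \<epsilon>) powr p * Lp_sum N p f"
proof -
  define g where "g = conv N f (mu N S)"
  define G where "G = {a \<in> tuples k S. Lp_sum N p (\<lambda>x. sample_avg N f k a x - g x) \<le> \<epsilon> powr p * Lp_sum N p f}"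
  have G_tuples: "G \<subseteq> tuples k S"
    by (auto simp: G_def)
  have card_G: "card S ^ k \<le> 2 * card G"
    unfolding G_def g_def by (rule card_good_samples[OF N S k p cond])
  obtain b X where XT: "X \<subseteq> T" and size: "real (card T) \<le> real (card X) * (2 * L ^ k)"
    and translates: "\<forall>t\<in>X. \<exists>a\<in>G. \<forall>i<k. (a i + t) mod int N = b i"
    using exists_common_translates[OF N S T G_tuples card_G ST] by (elim exE conjE)
  have X: "X \<subseteq> ZN N" "X \<noteq> {}"
    using XT T size finite_subset[OF T(1) finite_ZN] by (auto simp: card_gt_0_iff)
  \<comment> \<open>translating the sample average at \<open>b\<close> by any \<open>t \<in> X\<close> gives a good sample average\<close>
  have close: "Lp_sum N p (\<lambda>y. sample_avg N f k b ((y + t) mod int N) - g y) \<le> \<epsilon> powr p * Lp_sum N p f"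
    if "t \<in> X" for t
  proof -
    obtain a where a: "a \<in> G" and "\<forall>i<k. (a i + t) mod int N = b i"
      using translates \<open>t \<in> X\<close> by blast
    then have "(\<lambda>y. sample_avg N f k b ((y + t) mod int N) - g y) = (\<lambda>y. sample_avg N f k a y - g y)"
      by (simp add: sample_avg_translate)
    then show ?thesis
      using a by (simp add: G_def)
  qed
  have "Lp_sum N p (\<lambda>x. g x - g ((x + t' - t) mod int N)) \<le> 2 powr p * (\<epsilon> powr p * Lp_sum N p f)"
    if "t \<in> X" "t' \<in> X" for t t'
    using p close[OF that(1)] close[OF that(2)] by (intro Lp_sum_translate_diff_le[OF N]) auto
  then have "Lp_sum N p (\<lambda>x. g x - conv N g (lam N X) x) \<le> 2 powr p * (\<epsilon> powr p * Lp_sum N p f)"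
    using p by (intro Lp_sum_sub_conv_lam_le[OF N _ X]) auto
  then have "Lp_sum N p (\<lambda>x. g x - conv N g (conv_pow N (lam N X) l) x)
      \<le> real l powr p * (2 powr p * (\<epsilon> powr p * Lp_sum N p f))"
    using Lp_sum_sub_conv_pow_le[OF N _ is_density_lam[OF N X], of p g l] p
    by (meson order_trans mult_left_mono powr_ge_zero one_le_numeral order.trans)
  also have "\<dots> = (2 * real l * \<epsilon>) powr p * Lp_sum N p f"
    using \<epsilon> by (simp add: powr_mult)
  finally show ?thesis
    using XT size unfolding g_def by blast
qed

lemma sampling_const_le:
  assumes p: "p \<ge> 2" and \<epsilon>: "\<epsilon> > 0" and k: "real k \<ge> 64 * p / \<epsilon>\<^sup>2"
  shows "sampling_const p k \<le> \<epsilon> powr p / 2"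
proof -
  have k0: "real k > 0"
    using k p \<epsilon> by (smt (verit) divide_pos_pos zero_less_power)
  have "p / real k \<le> \<epsilon>\<^sup>2 / 64"
    using k k0 \<epsilon> by (simp add: field_simps)
  then have "(p / real k) powr (p / 2) \<le> (\<epsilon>\<^sup>2 / 64) powr (p / 2)"
    using p k0 by (intro powr_mono2) auto
  also have "\<dots> = \<epsilon> powr p / 2 powr (3 * p)"
  proof -
    have "(8::real) powr p = 2 powr (3 * p)"
      using powr_powr[of 2 3 p] by simp
    then show ?thesis
      using \<epsilon> by (simp add: powr_divide power2_powr)
  qed
  finally have bound: "(p / real k) powr (p / 2) \<le> \<epsilon> powr p / 2 powr (3 * p)" .
  have "sampling_const p k = 2 powr (2 * p + 1) * (p / real k) powr (p / 2)"
    using k0 p by (simp add: sampling_const_def powr_divide powr_minus_divide)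
  also have "\<dots> \<le> 2 powr (2 * p + 1) * (\<epsilon> powr p / 2 powr (3 * p))"
    by (rule mult_left_mono[OF bound]) simp
  also have "\<dots> = \<epsilon> powr p * 2 powr (1 - p)"
  proof -
    have "(2::real) powr (2 * p + 1) = 2 powr (1 - p) * 2 powr (3 * p)"
      by (simp add: powr_add[symmetric] algebra_simps)
    then show ?thesis
      by simp
  qed
  also have "\<dots> \<le> \<epsilon> powr p * 2 powr (- 1)"
    using p by (intro mult_left_mono powr_mono) auto
  finally show ?thesis
    by (simp add: powr_minus)
qed

lemma exists_sample_size:
  assumes p: "p \<ge> 2" and l: "l \<ge> 1" and \<theta>: "0 < \<theta>" "\<theta> < 1"
  shows "\<exists>k\<ge>1. sampling_const p k \<le> (\<theta> / (2 * real l)) powr p / 2 \<and> real k \<le> 257 * p * real l ^ 2 / \<theta> ^ 2"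
proof -
  define Q where "Q = p * real l ^ 2 / \<theta> ^ 2"
  have "p * 1 \<le> p * real l ^ 2"
    using p l by (intro mult_left_mono) auto
  moreover have "p * real l ^ 2 \<le> Q"
  proof -
    have "p * real l ^ 2 * \<theta> ^ 2 \<le> p * real l ^ 2"
      using p \<theta> by (intro mult_right_le_one_le) (auto simp: power_le_one)
    then show ?thesis
      using \<theta> by (simp add: Q_def le_divide_eq)
  qed
  ultimately have Q: "Q \<ge> 2"
    using p by linarith
  define k where "k = nat \<lceil>256 * Q\<rceil>"
  have "real k \<ge> 256 * Q" "real k \<le> 256 * Q + 1"
    using Q by (auto simp: k_def of_nat_nat ceiling_correct)
  moreover have "64 * p / (\<theta> / (2 * real l))\<^sup>2 = 256 * Q"
    using \<theta> l by (simp add: Q_def power_divide field_simps)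
  ultimately have "real k \<ge> 64 * p / (\<theta> / (2 * real l))\<^sup>2" "k \<ge> 1" "real k \<le> 257 * Q"
    using Q by linarith+
  then show ?thesis
    using \<theta> l by (intro exI[of _ k] conjI sampling_const_le p) (auto simp: Q_def)
qed

lemma card_lower_bound_powr:
  assumes L: "L \<ge> 1" and k: "k \<ge> 1" and c: "real k \<le> c"
    and card: "real (card T) \<le> real (card X) * (2 * L ^ k)"
  shows "(2 * L) powr (- c) * real (card T) \<le> real (card X)"
proof -
  have pos: "0 < 2 * L ^ k"
    using L by simp
  have "2 * L ^ k \<le> 2 ^ k * L ^ k"
    using L k by (intro mult_right_mono) (auto simp: self_le_power)
  then have "(2 * L) powr (- real k) \<le> 1 / (2 * L ^ k)"
    using L pos by (simp add: powr_minus_divide powr_realpow power_mult_distrib frac_le)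
  moreover have "(2 * L) powr (- c) \<le> (2 * L) powr (- real k)"
    using L c by (intro powr_mono) auto
  ultimately have "(2 * L) powr (- c) * real (card T) \<le> real (card T) / (2 * L ^ k)"
    by (metis divide_inverse mult.commute mult_left_mono inverse_eq_divide of_nat_0_le_iff order_trans)
  also have "\<dots> \<le> real (card X)"
    using card pos by (simp add: divide_le_eq)
  finally show ?thesis .
qed

theorem lemma5p6:
  shows "\<exists>C::real. C > 0 \<and>
    (\<forall>(N::nat) (p::real) (l::nat) (\<theta>::real) (f::int \<Rightarrow> complex) (L::real) (S::int set) (T::int set).
       N \<ge> 1 \<longrightarrow> p \<ge> 2 \<longrightarrow> l \<ge> 1 \<longrightarrow> 0 < \<theta> \<longrightarrow> \<theta> < 1 \<longrightarrow> L \<ge> 1 \<longrightarrow>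
       S \<subseteq> ZN N \<longrightarrow> T \<subseteq> ZN N \<longrightarrow> S \<noteq> {} \<longrightarrow> T \<noteq> {} \<longrightarrow>
       real (card (sumset N S T)) \<le> L * real (card S) \<longrightarrow>
       (\<exists>X. X \<subseteq> T \<and>
          real (card X) \<ge> (2 * L) powr (- C * p * real l ^ 2 / \<theta> ^ 2) * real (card T) \<and>
          Lp_norm N p (\<lambda>x. conv N f (mu N S) x - conv N (conv N f (mu N S)) (conv_pow N (lam N X) l) x)
            \<le> \<theta> * Lp_norm N p f))"
proof (intro exI[of _ 257] conjI allI impI)
  fix N :: nat and p \<theta> L :: real and l :: nat and f :: "int \<Rightarrow> complex" and S T :: "int set"
  assume N: "N \<ge> 1" and p: "p \<ge> 2" and l: "l \<ge> 1" and \<theta>: "0 < \<theta>" "\<theta> < 1" and L: "L \<ge> 1"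
    and S: "S \<subseteq> ZN N" and T: "T \<subseteq> ZN N" and S0: "S \<noteq> {}" and T0: "T \<noteq> {}"
    and ST: "real (card (sumset N S T)) \<le> L * real (card S)"
  define \<epsilon> where "\<epsilon> = \<theta> / (2 * real l)"
  have \<epsilon>: "\<epsilon> > 0" "2 * real l * \<epsilon> = \<theta>"
    using \<theta> l by (simp_all add: \<epsilon>_def)
  obtain k where k: "k \<ge> 1" "real k \<le> 257 * p * real l ^ 2 / \<theta> ^ 2"
    and cond: "sampling_const p k \<le> \<epsilon> powr p / 2"
    using exists_sample_size[OF p l \<theta>] by (auto simp: \<epsilon>_def)
  obtain X where XT: "X \<subseteq> T" and size: "real (card T) \<le> real (card X) * (2 * L ^ k)"
    and period: "Lp_sum N p (\<lambda>x. conv N f (mu N S) x - conv N (conv N f (mu N S)) (conv_pow N (lam N X) l) x)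
      \<le> \<theta> powr p * Lp_sum N p f"
    using croot_sisask_almost_period[OF N S S0 T T0 k(1) p \<epsilon>(1) cond ST, of f l] \<epsilon>(2) by auto
  show "\<exists>X. X \<subseteq> T \<and> real (card X) \<ge> (2 * L) powr (- 257 * p * real l ^ 2 / \<theta> ^ 2) * real (card T) \<and>
      Lp_norm N p (\<lambda>x. conv N f (mu N S) x - conv N (conv N f (mu N S)) (conv_pow N (lam N X) l) x)
        \<le> \<theta> * Lp_norm N p f"
    using XT card_lower_bound_powr[OF L k size] Lp_norm_le_if_Lp_sum_le[OF \<theta>(1) _ period] p by auto
qed simp

end
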